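(* Let $H$ be a graph with vertex set $[h]$ such that no triangle of $H$ contains the vertex $h$ (equivalently, $N_H(h)$ is an independent set in $H$). Let $C_H=\max\{1,8d_H(h)\}$. Let $0<\gamma\leq\frac12$ and let $n\geq \gamma^{-16h}$. Let $G$ be a graph and let $V_1,\dots,V_h\subseteq V(G)$ form a $(\gamma,\geq n)$-inflation of $H$. Then there exist $V_h^*\subseteq V_h$ and $V_i'\subseteq V_i$ for $i\in[h-1]$ such that: (1) $|V_h^*|\geq \frac{\log n}{8\log(1/\gamma)}$; (2) for every $j\in N_H(h)$, every vertex of $V_j'$ is adjacent in $G$ to every vertex of $V_h^*$; (3) $(V_1',\dots,V_{h-1}')$ forms a $(\gamma',\geq n')$-inflation of the graph $H\setminus\{h\}$ (on vertex set $[h-1]$), where $n'=\sqrt n$ and $\gamma'=\gamma^{C_H}$.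
   Context: $N_H(v)$ and $d_H(v)$ denote the neighborhood and degree of $v$ in $H$. Let $G$ be a graph, $H$ a graph with vertex set $[h]$, and $V_1,\dots,V_h$ pairwise disjoint subsets of $V(G)$. A canonical copy of $H$ in $(V_1,\dots,V_h)$ is a tuple $(v_1,\dots,v_h)$ with $v_i\in V_i$ for all $i$ such that $v_iv_j\in E(G)$ whenever $ij\in E(H)$. The tuple $(V_1,\dots,V_h)$ is a $\gamma$-inflation of $H$ if it contains at least $\gamma\prod_{i=1}^h|V_i|$ canonical copies of $H$; it is a $(\gamma,\geq n)$-inflation if moreover $|V_i|\geq n$ for all $i$. All logarithms are to base $2$. *)

theory Defs
  imports Complex_Main "HOL-Library.FuncSet"
begin

definition is_graph :: "('a \<Rightarrow> 'a \<Rightarrow> bool) \<Rightarrow> bool" where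
  "is_graph E \<longleftrightarrow> (\<forall>x y. E x y \<longrightarrow> E y x) \<and> (\<forall>x. \<not> E x x)"

definition graph_on :: "nat \<Rightarrow> (nat \<Rightarrow> nat \<Rightarrow> bool) \<Rightarrow> bool" where
  "graph_on h EH \<longleftrightarrow> is_graph EH \<and> (\<forall>i j. EH i j \<longrightarrow> i \<in> {1..h} \<and> j \<in> {1..h})"

definition nbhd :: "nat \<Rightarrow> (nat \<Rightarrow> nat \<Rightarrow> bool) \<Rightarrow> nat \<Rightarrow> nat set" where
  "nbhd h EH v = {j \<in> {1..h}. EH v j}"

definition deg :: "nat \<Rightarrow> (nat \<Rightarrow> nat \<Rightarrow> bool) \<Rightarrow> nat \<Rightarrow> nat" where
  "deg h EH v = card (nbhd h EH v)"

definition canonical_copies ::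
  "('a \<Rightarrow> 'a \<Rightarrow> bool) \<Rightarrow> (nat \<Rightarrow> nat \<Rightarrow> bool) \<Rightarrow> nat \<Rightarrow> (nat \<Rightarrow> 'a set) \<Rightarrow> (nat \<Rightarrow> 'a) set" where
  "canonical_copies EG EH h V =
     {v \<in> PiE {1..h} V. \<forall>i\<in>{1..h}. \<forall>j\<in>{1..h}. EH i j \<longrightarrow> EG (v i) (v j)}"

definition inflation ::
  "('a \<Rightarrow> 'a \<Rightarrow> bool) \<Rightarrow> (nat \<Rightarrow> nat \<Rightarrow> bool) \<Rightarrow> nat \<Rightarrow> (nat \<Rightarrow> 'a set) \<Rightarrow> real \<Rightarrow> bool" where
  "inflation EG EH h V \<gamma> \<longleftrightarrow>
     (\<forall>i\<in>{1..h}. finite (V i)) \<and>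
     (\<forall>i\<in>{1..h}. \<forall>j\<in>{1..h}. i \<noteq> j \<longrightarrow> V i \<inter> V j = {}) \<and>
     real (card (canonical_copies EG EH h V)) \<ge> \<gamma> * (\<Prod>i\<in>{1..h}. real (card (V i)))"

definition inflation_ge ::
  "('a \<Rightarrow> 'a \<Rightarrow> bool) \<Rightarrow> (nat \<Rightarrow> nat \<Rightarrow> bool) \<Rightarrow> nat \<Rightarrow> (nat \<Rightarrow> 'a set) \<Rightarrow> real \<Rightarrow> real \<Rightarrow> bool" where
  "inflation_ge EG EH h V \<gamma> n \<longleftrightarrow>
     inflation EG EH h V \<gamma> \<and> (\<forall>i\<in>{1..h}. real (card (V i)) \<ge> n)"

end

(* Dependent random choice. Split a canonical copy of H into its part y on the
   neighbourhood N of h and its part w on the remaining vertices, which include h, and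
   pick t = ceil (log n / (8 log (1 / gamma))) such parts w_1, ..., w_t at random.
   As N is independent, the y completing every w_k to a copy of H form a box
   prod_(j in N) B_j, where B_j consists of the vertices of V_j adjacent to the images
   under all w_k of the neighbours of j outside N; in particular B_j is complete to
   {w_1 h, ..., w_t h}. By convexity the box is expected to contain a gamma^t fraction
   of all y, whereas the y with few completions to a copy of H - h (less than a
   2 gamma^(8d) fraction of the possible ones, d the degree of h) make up at most a
   (2 gamma^(8d))^t fraction. Since n >= gamma^(-16h), these y and coincidences among
   the w_k h are negligible, so some choice yields t distinct vertices w_k h and a box
   whose sides have at least sqrt n elements and half of whose points have many
   completions. *)

theory Submission
  imports Defs "HOL-Analysis.Finite_Product_Measure"
begin

section \<open>Dependent random choice\<close>

lemma sum_power_ge_card_mult_power: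
  fixes x :: "'i \<Rightarrow> real" and c :: real
  assumes "finite I" and nonneg: "\<forall>i\<in>I. 0 \<le> x i" and "0 \<le> c" and mean: "c * card I \<le> sum x I"
  shows "card I * c ^ t \<le> (\<Sum>i\<in>I. x i ^ t)"
proof (cases "c = 0")
  case True
  then show ?thesis
    using nonneg by (cases t) (auto intro: sum_nonneg)
next
  case False
  with \<open>0 \<le> c\<close> have "0 < c" by simp
  have tangent: "c ^ t + t * c ^ t * (x i / c - 1) \<le> x i ^ t" if "i \<in> I" for i
  proof -
    have "1 + t * (x i / c - 1) \<le> (x i / c) ^ t"
      using Bernoulli_inequality[of "x i / c - 1" t] nonneg that \<open>0 < c\<close> by simp
    from mult_left_mono[OF this, of "c ^ t"] show ?thesis
      using \<open>0 < c\<close> by (simp add: power_divide algebra_simps)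
  qed
  have "(\<Sum>i\<in>I. x i / c - 1) = sum x I / c - card I"
    by (simp add: sum_subtractf sum_divide_distrib)
  then have "(\<Sum>i\<in>I. c ^ t + t * c ^ t * (x i / c - 1)) = card I * c ^ t + t * c ^ t * (sum x I / c - card I)"
    by (simp add: sum.distrib flip: sum_distrib_left)
  moreover have "card I \<le> sum x I / c"
    using mean \<open>0 < c\<close> by (simp add: field_simps)
  ultimately have "card I * c ^ t \<le> (\<Sum>i\<in>I. c ^ t + t * c ^ t * (x i / c - 1))"
    using \<open>0 < c\<close> by simp
  also have "\<dots> \<le> (\<Sum>i\<in>I. x i ^ t)"
    using tangent by (rule sum_mono)
  finally show ?thesis .
qed

lemma sum_tuples_card_all_in:
  assumes "finite Y" and "finite W" and "\<forall>y\<in>Y. S y \<subseteq> W"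
  shows "(\<Sum>ws\<in>PiE {..<t} (\<lambda>_. W). card {y\<in>Y. \<forall>k<t. ws k \<in> S y}) = (\<Sum>y\<in>Y. card (S y) ^ t)"
proof -
  have tuples: "{ws \<in> PiE {..<t} (\<lambda>_. W). \<forall>k<t. ws k \<in> S y} = PiE {..<t} (\<lambda>_. S y)" if "y \<in> Y" for y
    using assms(3) that by (auto simp: PiE_def Pi_def)
  have "(\<Sum>ws\<in>PiE {..<t} (\<lambda>_. W). card {y\<in>Y. \<forall>k<t. ws k \<in> S y})
      = (\<Sum>ws\<in>PiE {..<t} (\<lambda>_. W). \<Sum>y\<in>Y. if \<forall>k<t. ws k \<in> S y then 1 else 0)"
    using assms(1) by (simp add: sum.inter_filter[symmetric])
  also have "\<dots> = (\<Sum>y\<in>Y. \<Sum>ws\<in>PiE {..<t} (\<lambda>_. W). if \<forall>k<t. ws k \<in> S y then 1 else 0)"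
    by (rule sum.swap)
  also have "\<dots> = (\<Sum>y\<in>Y. card (S y) ^ t)"
    using assms(2) by (intro sum.cong) (simp_all add: sum.inter_filter[symmetric] finite_PiE tuples card_PiE)
  finally show ?thesis .
qed

lemma sum_tuples_card_all_in_ge:
  fixes \<gamma> :: real
  assumes "finite Y" and "finite W" and "\<forall>y\<in>Y. S y \<subseteq> W"
    and "0 \<le> \<gamma>" and dense: "\<gamma> * card W * card Y \<le> (\<Sum>y\<in>Y. card (S y))"
  shows "card Y * (\<gamma> * card W) ^ t \<le> (\<Sum>ws\<in>PiE {..<t} (\<lambda>_. W). real (card {y\<in>Y. \<forall>k<t. ws k \<in> S y}))"
proof -
  have "card Y * (\<gamma> * card W) ^ t \<le> (\<Sum>y\<in>Y. real (card (S y)) ^ t)"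
    using assms(1,4) dense by (intro sum_power_ge_card_mult_power) auto
  also have "\<dots> = real (\<Sum>y\<in>Y. card (S y) ^ t)"
    by simp
  also have "\<dots> = (\<Sum>ws\<in>PiE {..<t} (\<lambda>_. W). real (card {y\<in>Y. \<forall>k<t. ws k \<in> S y}))"
    unfolding sum_tuples_card_all_in[OF assms(1-3), symmetric] by simp
  finally show ?thesis .
qed

lemma sum_tuples_card_all_in_le:
  fixes \<theta> :: real
  assumes "finite Y" and "finite W" and "\<forall>y\<in>Y. S y \<subseteq> W"
    and sparse: "\<forall>y\<in>Y. card (S y) \<le> \<theta> * card W"
  shows "(\<Sum>ws\<in>PiE {..<t} (\<lambda>_. W). real (card {y\<in>Y. \<forall>k<t. ws k \<in> S y})) \<le> card Y * (\<theta> * card W) ^ t"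
proof -
  have "(\<Sum>ws\<in>PiE {..<t} (\<lambda>_. W). real (card {y\<in>Y. \<forall>k<t. ws k \<in> S y})) = real (\<Sum>y\<in>Y. card (S y) ^ t)"
    unfolding sum_tuples_card_all_in[OF assms(1-3), symmetric] by simp
  also have "\<dots> \<le> (\<Sum>y\<in>Y. (\<theta> * card W) ^ t)"
    unfolding of_nat_sum of_nat_power using sparse by (intro sum_mono power_mono) auto
  also have "\<dots> = card Y * (\<theta> * card W) ^ t"
    by simp
  finally show ?thesis .
qed

lemma ex_pos_of_sum_gt:
  fixes F :: "'x \<Rightarrow> real" and c :: real
  assumes "finite T" and bounded: "\<forall>x\<in>T. F x \<le> c"
    and gt: "card {x\<in>T. \<not> Q x} * c < (\<Sum>x\<in>T. F x)"
  shows "\<exists>x\<in>T. Q x \<and> 0 < F x"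
proof (rule ccontr)
  assume "\<not> ?thesis"
  then have "(\<Sum>x\<in>{x\<in>T. Q x}. F x) \<le> 0"
    by (intro sum_nonpos) auto
  moreover have "(\<Sum>x\<in>{x\<in>T. \<not> Q x}. F x) \<le> card {x\<in>T. \<not> Q x} * c"
    using bounded by (intro sum_bounded_above) auto
  moreover have "(\<Sum>x\<in>T. F x) = (\<Sum>x\<in>{x\<in>T. Q x}. F x) + (\<Sum>x\<in>{x\<in>T. \<not> Q x}. F x)"
    using \<open>finite T\<close> by (subst sum.union_disjoint[symmetric]) (auto intro: sum.cong)
  ultimately show False
    using gt by linarith
qed

lemma card_tuples_collision_le:
  assumes "finite W" and "a < t" and "b < t" and "a \<noteq> b"
    and fibres: "\<forall>u. card {w\<in>W. f w = u} \<le> c"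
  shows "card {ws \<in> PiE {..<t} (\<lambda>_. W). f (ws a) = f (ws b)} \<le> c * card W ^ (t - 1)"
proof -
  let ?T = "PiE ({..<t} - {b}) (\<lambda>_. W)"
  let ?fibre = "\<lambda>v. {w\<in>W. f w = f (v a)}"
  have "inj_on (\<lambda>ws. (ws(b := undefined), ws b)) {ws \<in> PiE {..<t} (\<lambda>_. W). f (ws a) = f (ws b)}"
    by (rule inj_onI) (metis fun_upd_triv fun_upd_upd prod.inject)
  moreover have "(\<lambda>ws. (ws(b := undefined), ws b)) ` {ws \<in> PiE {..<t} (\<lambda>_. W). f (ws a) = f (ws b)}
      \<subseteq> Sigma ?T ?fibre"
    using assms(2-4) by (auto simp: PiE_def Pi_def extensional_def)
  moreover have "finite (Sigma ?T ?fibre)"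
    using assms(1) by (simp add: finite_PiE)
  ultimately have "card {ws \<in> PiE {..<t} (\<lambda>_. W). f (ws a) = f (ws b)} \<le> card (Sigma ?T ?fibre)"
    by (rule card_inj_on_le)
  also have "\<dots> = (\<Sum>v\<in>?T. card (?fibre v))"
    using assms(1) by (simp add: finite_PiE)
  also have "\<dots> \<le> card ?T * c"
    using sum_bounded_above[of ?T "\<lambda>v. card (?fibre v)" c] fibres by simp
  also have "card ?T = card W ^ (t - 1)"
    using assms(3) by (simp add: card_PiE)
  finally show ?thesis by (simp add: mult.commute)
qed

lemma card_tuples_not_inj_le:
  assumes "finite W" and fibres: "\<forall>u. card {w\<in>W. f w = u} \<le> c"
  shows "card {ws \<in> PiE {..<t} (\<lambda>_. W). \<not> inj_on (\<lambda>k. f (ws k)) {..<t}} \<le> t * t * c * card W ^ (t - 1)"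
proof -
  let ?E = "\<lambda>a b. {ws \<in> PiE {..<t} (\<lambda>_. W). f (ws a) = f (ws b)}"
  have "{ws \<in> PiE {..<t} (\<lambda>_. W). \<not> inj_on (\<lambda>k. f (ws k)) {..<t}} \<subseteq> (\<Union>a<t. \<Union>b\<in>{..<t} - {a}. ?E a b)"
    by (auto simp: inj_on_def)
  then have "card {ws \<in> PiE {..<t} (\<lambda>_. W). \<not> inj_on (\<lambda>k. f (ws k)) {..<t}}
      \<le> card (\<Union>a<t. \<Union>b\<in>{..<t} - {a}. ?E a b)"
    using assms(1) by (intro card_mono) (auto simp: finite_PiE)
  also have "\<dots> \<le> (\<Sum>a<t. \<Sum>b\<in>{..<t} - {a}. card (?E a b))"
    by (intro order.trans[OF card_UN_le] sum_mono card_UN_le) auto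
  also have "\<dots> \<le> (\<Sum>a<t. \<Sum>b\<in>{..<t} - {a}. c * card W ^ (t - 1))"
    using assms by (intro sum_mono card_tuples_collision_le) auto
  also have "\<dots> \<le> (\<Sum>a<t. \<Sum>b<t. c * card W ^ (t - 1))"
    by (intro sum_mono sum_mono2) auto
  finally show ?thesis by (simp add: algebra_simps)
qed

text \<open>Averaging over all \<open>t\<close>-tuples of \<open>W\<close> takes the place of the random choice.\<close>

lemma dependent_random_choice:
  fixes S :: "'y \<Rightarrow> 'w set" and \<gamma> \<theta> \<epsilon> \<delta> :: real
  assumes "finite Y" and "Y \<noteq> {}" and "finite W" and "W \<noteq> {}" and "\<forall>y\<in>Y. S y \<subseteq> W"
    and dense: "\<gamma> * card W * card Y \<le> (\<Sum>y\<in>Y. card (S y))"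
    and sparse: "\<forall>y\<in>Y. bad y \<longrightarrow> card (S y) \<le> \<theta> * card W"
    and rare: "card {ws \<in> PiE {..<t} (\<lambda>_. W). \<not> Q ws} \<le> \<delta> * card W ^ t"
    and "0 \<le> \<gamma>" and "0 \<le> \<theta>" and "0 \<le> \<epsilon>"
    and margin: "2 * \<theta> ^ t + \<epsilon> + \<delta> < \<gamma> ^ t"
  shows "\<exists>ws \<in> PiE {..<t} (\<lambda>_. W). Q ws \<and>
    2 * card {y\<in>Y. bad y \<and> (\<forall>k<t. ws k \<in> S y)} + \<epsilon> * card Y < card {y\<in>Y. \<forall>k<t. ws k \<in> S y}"
proof -
  define T where "T = PiE {..<t} (\<lambda>_. W)"
  define F where "F ws = real (card {y\<in>Y. \<forall>k<t. ws k \<in> S y})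
    - 2 * card {y\<in>Y. bad y \<and> (\<forall>k<t. ws k \<in> S y)} - \<epsilon> * card Y" for ws
  define K where "K = card Y * real (card W) ^ t"
  have "finite T" and "card T = card W ^ t"
    using assms(3) by (simp_all add: T_def finite_PiE card_PiE)
  have "0 < K"
    using assms(1-4) by (simp add: K_def card_gt_0_iff)
  have all: "K * \<gamma> ^ t \<le> (\<Sum>ws\<in>T. real (card {y\<in>Y. \<forall>k<t. ws k \<in> S y}))"
    using sum_tuples_card_all_in_ge[OF assms(1,3,5) \<open>0 \<le> \<gamma>\<close> dense, of t]
    by (simp add: T_def K_def power_mult_distrib mult_ac)
  have "(\<Sum>ws\<in>T. real (card {y\<in>Y. bad y \<and> (\<forall>k<t. ws k \<in> S y)})) \<le> card {y\<in>Y. bad y} * (\<theta> * card W) ^ t"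
    using sum_tuples_card_all_in_le[of "{y\<in>Y. bad y}" W S \<theta> t] assms(1,3,5) sparse
    unfolding T_def by (simp add: conj_assoc)
  also have "\<dots> \<le> card Y * (\<theta> * card W) ^ t"
    using assms(1) \<open>0 \<le> \<theta>\<close> by (intro mult_right_mono) (auto intro: card_mono)
  also have "\<dots> = K * \<theta> ^ t"
    by (simp add: K_def power_mult_distrib)
  finally have bad: "(\<Sum>ws\<in>T. real (card {y\<in>Y. bad y \<and> (\<forall>k<t. ws k \<in> S y)})) \<le> K * \<theta> ^ t" .
  have "(\<Sum>ws\<in>T. F ws) = (\<Sum>ws\<in>T. real (card {y\<in>Y. \<forall>k<t. ws k \<in> S y}))
      - 2 * (\<Sum>ws\<in>T. real (card {y\<in>Y. bad y \<and> (\<forall>k<t. ws k \<in> S y)})) - K * \<epsilon>"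
    by (simp add: F_def sum_subtractf sum_distrib_left K_def \<open>card T = card W ^ t\<close>)
  moreover have "2 * (K * \<theta> ^ t) + K * \<epsilon> + K * \<delta> < K * \<gamma> ^ t"
    using mult_strict_left_mono[OF margin \<open>0 < K\<close>] by (simp add: algebra_simps)
  ultimately have sum_F: "K * \<delta> < (\<Sum>ws\<in>T. F ws)"
    using all bad by linarith
  have F_le: "\<forall>ws\<in>T. F ws \<le> card Y"
  proof
    fix ws
    have "real (card {y\<in>Y. \<forall>k<t. ws k \<in> S y}) \<le> card Y"
      using assms(1) by (simp add: card_mono)
    moreover have "0 \<le> \<epsilon> * card Y"
      using \<open>0 \<le> \<epsilon>\<close> by simp
    ultimately show "F ws \<le> card Y"
      unfolding F_def by linarith
  qed
  have "card {ws\<in>T. \<not> Q ws} * real (card Y) \<le> K * \<delta>"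
    using mult_right_mono[OF rare, of "card Y"] by (simp add: K_def T_def algebra_simps)
  then have "card {ws\<in>T. \<not> Q ws} * real (card Y) < (\<Sum>ws\<in>T. F ws)"
    using sum_F by linarith
  then obtain ws where "ws \<in> T" "Q ws" "0 < F ws"
    using ex_pos_of_sum_gt[OF \<open>finite T\<close> F_le] by blast
  then show ?thesis
    unfolding T_def F_def by auto
qed

section \<open>Partial tuples and canonical copies\<close>

lemma card_eq_sum_card_merge_fibres:
  assumes "I \<inter> J = {}" and "C \<subseteq> PiE (I \<union> J) V"
    and "finite (PiE I V)" and "finite (PiE J V)"
  shows "card C = (\<Sum>y\<in>PiE I V. card {w \<in> PiE J V. merge I J (y, w) \<in> C})"
proof -
  let ?fibres = "Sigma (PiE I V) (\<lambda>y. {w \<in> PiE J V. merge I J (y, w) \<in> C})"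
  have "inj_on (merge I J) (PiE I V \<times> PiE J V)"
  proof (rule inj_onI, clarify)
    fix x y x' y'
    assume "x \<in> PiE I V" "y \<in> PiE J V" "x' \<in> PiE I V" "y' \<in> PiE J V"
      and "merge I J (x, y) = merge I J (x', y')"
    then show "x = x' \<and> y = y'"
      using restrict_merge[OF assms(1)] by (metis PiE_restrict)
  qed
  then have "inj_on (merge I J) ?fibres"
    by (rule inj_on_subset) auto
  moreover have "merge I J ` ?fibres = C"
  proof
    show "C \<subseteq> merge I J ` ?fibres"
    proof
      fix x assume "x \<in> C"
      then have "x \<in> PiE (I \<union> J) V"
        using assms(2) by blast
      then have "x = merge I J (restrict x I, restrict x J)"
        by (simp add: PiE_def extensional_restrict)
      moreover have "restrict x I \<in> PiE I V" "restrict x J \<in> PiE J V"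
        using \<open>x \<in> PiE (I \<union> J) V\<close> by (auto simp: PiE_iff)
      ultimately show "x \<in> merge I J ` ?fibres"
        using \<open>x \<in> C\<close> by (intro image_eqI[where x = "(restrict x I, restrict x J)"]) auto
    qed
  qed auto
  ultimately have "card C = card ?fibres"
    using card_image by fastforce
  also have "\<dots> = (\<Sum>y\<in>PiE I V. card {w \<in> PiE J V. merge I J (y, w) \<in> C})"
    using assms(3,4) by (simp add: card_SigmaI)
  finally show ?thesis .
qed

lemma PiE_insert_eqI:
  assumes "x \<in> PiE (insert a K) V" and "y \<in> PiE (insert a K) V"
    and "restrict x K = restrict y K" and "x a = y a"
  shows "x = y"
  using assms by (intro PiE_ext[of x "insert a K" V]) (auto simp: fun_eq_iff split: if_splits)

lemma card_le_card_restrict_mult: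
  assumes "X \<subseteq> PiE (insert a K) V" and "a \<notin> K" and "finite X" and "finite (V a)"
  shows "card X \<le> card ((\<lambda>x. restrict x K) ` X) * card (V a)"
proof -
  have "inj_on (\<lambda>x. (restrict x K, x a)) X"
    using assms(1) by (intro inj_onI) (rule PiE_insert_eqI[of _ a K V], auto)
  moreover have "(\<lambda>x. (restrict x K, x a)) ` X \<subseteq> (\<lambda>x. restrict x K) ` X \<times> V a"
    using assms(1) by (auto simp: PiE_iff)
  ultimately have "card X \<le> card ((\<lambda>x. restrict x K) ` X \<times> V a)"
    using assms(3,4) by (intro card_inj_on_le) auto
  then show ?thesis
    by (simp add: card_cartesian_product)
qed

lemma card_PiE_fibre_le:
  assumes "a \<notin> K" and "finite (PiE K V)"
  shows "card {w \<in> PiE (insert a K) V. w a = u} \<le> card (PiE K V)"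
proof (rule card_inj_on_le)
  show "inj_on (\<lambda>w. restrict w K) {w \<in> PiE (insert a K) V. w a = u}"
    by (intro inj_onI) (rule PiE_insert_eqI[of _ a K V], auto)
qed (use assms in \<open>auto simp: PiE_iff\<close>)

lemma restrict_canonical_copies:
  assumes "x \<in> canonical_copies EG EH h V" and "h' \<le> h"
  shows "restrict x {1..h'} \<in> canonical_copies EG EH h' V"
  using assms by (auto simp: canonical_copies_def PiE_iff)

lemma canonical_copies_subsets:
  assumes "\<forall>i\<in>{1..h}. V' i \<subseteq> V i"
  shows "canonical_copies EG EH h V' = canonical_copies EG EH h V \<inter> PiE {1..h} V'"
  using assms by (auto simp: canonical_copies_def PiE_def)

lemma card_canonical_copies_le_delete_last:
  assumes "1 \<le> h" and "\<forall>i\<in>{1..h}. finite (V i)"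
  shows "card (canonical_copies EG EH h V) \<le> card (canonical_copies EG EH (h - 1) V) * card (V h)"
proof -
  have copies_sub: "canonical_copies EG EH k V \<subseteq> PiE {1..k} V" for k
    by (auto simp: canonical_copies_def)
  have "{1..h} = insert h {1..h - 1}"
    using assms(1) by auto
  moreover have "finite (canonical_copies EG EH h V)"
    using finite_subset[OF copies_sub[of h] finite_PiE[of "{1..h}" V]] assms(2) by simp
  ultimately have "card (canonical_copies EG EH h V)
      \<le> card ((\<lambda>x. restrict x {1..h - 1}) ` canonical_copies EG EH h V) * card (V h)"
    using assms copies_sub[of h] by (intro card_le_card_restrict_mult) auto
  also have "\<dots> \<le> card (canonical_copies EG EH (h - 1) V) * card (V h)"
    using assms(2) restrict_canonical_copies[of _ EG EH h V "h - 1"]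
    by (intro mult_right_mono card_mono finite_subset[OF copies_sub finite_PiE]) auto
  finally show ?thesis .
qed

lemma inflation_ge_of_subsets:
  fixes \<gamma> n :: real
  assumes "h' \<le> h" and sub: "\<forall>i\<in>{1..h'}. V' i \<subseteq> V i"
    and finite: "\<forall>i\<in>{1..h}. finite (V i)"
    and disjoint: "\<forall>i\<in>{1..h}. \<forall>j\<in>{1..h}. i \<noteq> j \<longrightarrow> V i \<inter> V j = {}"
    and copies: "\<gamma> * (\<Prod>i\<in>{1..h'}. real (card (V' i))) \<le> card (canonical_copies EG EH h' V')"
    and sizes: "\<forall>i\<in>{1..h'}. n \<le> card (V' i)"
  shows "inflation_ge EG EH h' V' \<gamma> n"
proof -
  have "{1..h'} \<subseteq> {1..h}"
    using assms(1) by auto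
  then have "finite (V' i)" if "i \<in> {1..h'}" for i
    using finite_subset[OF sub[rule_format, OF that]] finite that by blast
  moreover have "V' i \<inter> V' j = {}" if "i \<in> {1..h'}" "j \<in> {1..h'}" "i \<noteq> j" for i j
    using sub disjoint \<open>{1..h'} \<subseteq> {1..h}\<close> that by blast
  ultimately show ?thesis
    using copies sizes by (simp add: inflation_ge_def inflation_def)
qed

section \<open>Numerical estimates\<close>

lemma log2_le_double:
  assumes "0 < y"
  shows "log 2 y \<le> 2 * y"
proof -
  have "ln (1/2::real) \<le> 1/2 - 1"
    by (rule ln_le_minus_one) simp
  then have "1/2 \<le> ln (2::real)"
    by (simp add: ln_div)
  then have "y \<le> y * (2 * ln 2)"
    using mult_left_mono[of 1 "2 * ln 2" y] assms by simp
  then have "ln y \<le> 2 * y * ln 2"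
    using ln_less_self[OF assms] by simp
  then have "ln y / ln 2 \<le> 2 * y"
    by (simp add: pos_divide_le_eq)
  then show ?thesis
    by (simp add: log_def)
qed

lemma log_ge_of_powr_le:
  fixes g x :: real
  assumes "0 < g" and "g \<le> 1/2" and "2 \<le> h" and large: "g powr (- 16 * real h) \<le> x"
  shows "0 < x" and "32 * log 2 (1 / g) \<le> log 2 x" and "32 \<le> log 2 x"
proof -
  define L where "L = log 2 (1 / g)"
  have "1 \<le> L"
    using assms(1,2) by (simp add: L_def le_log_iff field_simps)
  show "0 < x"
    using large powr_gt_zero[of g "- 16 * real h"] assms(1) by linarith
  have "g = 2 powr (- L)"
    using assms(1) by (simp add: L_def powr_minus_divide)
  then have "2 powr (16 * h * L) \<le> 2 powr (log 2 x)"
    using large \<open>0 < x\<close> by (simp add: powr_powr mult_ac)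
  then have "16 * h * L \<le> log 2 x"
    by simp
  moreover have "32 * L \<le> 16 * h * L"
    using \<open>2 \<le> h\<close> \<open>1 \<le> L\<close> by simp
  ultimately show "32 * log 2 (1 / g) \<le> log 2 x" and "32 \<le> log 2 x"
    using \<open>1 \<le> L\<close> unfolding L_def by linarith+
qed

lemma exponent_bounds:
  fixes g :: real and n h t :: nat
  assumes "0 < g" and "g \<le> 1/2" and "2 \<le> h" and large: "g powr (- 16 * real h) \<le> n"
    and t_def: "t = nat \<lceil>log 2 n / (8 * log 2 (1 / g))\<rceil>"
  shows "1 \<le> t" and "t \<le> 4 * 2 powr (log 2 n / 8)" and "2 powr (- 5/32 * log 2 n) \<le> g ^ t"
proof -
  define L where "L = log 2 (1 / g)"
  define l where "l = log 2 n"
  have "1 \<le> L"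
    using assms(1,2) by (simp add: L_def le_log_iff field_simps)
  have g_eq: "g = 2 powr (- L)"
    using assms(1) by (simp add: L_def powr_minus_divide)
  have "32 * L \<le> l" and "32 \<le> l"
    using log_ge_of_powr_le[OF assms(1-4)] by (simp_all add: L_def l_def)
  then have "0 < l / (8 * L)"
    using \<open>1 \<le> L\<close> by simp
  moreover have "t = nat \<lceil>l / (8 * L)\<rceil>"
    unfolding t_def l_def L_def ..
  ultimately have "real t = of_int \<lceil>l / (8 * L)\<rceil>"
    by simp
  then have t_lower: "l / (8 * L) \<le> t" and t_upper: "t < l / (8 * L) + 1"
    using ceiling_correct[of "l / (8 * L)"] by linarith+
  show "1 \<le> t"
    using t_lower \<open>0 < l / (8 * L)\<close> by linarith
  have "l / 8 \<le> 2 * 2 powr (l / 8)"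
    using log2_le_double[of "2 powr (l / 8)"] by simp
  moreover have "l / (8 * L) \<le> l / 8"
    using \<open>1 \<le> L\<close> \<open>32 \<le> l\<close> by (intro divide_left_mono) auto
  ultimately show "t \<le> 4 * 2 powr (log 2 n / 8)"
    using t_upper \<open>32 \<le> l\<close> unfolding l_def by linarith
  have "L * t \<le> L * (l / (8 * L) + 1)"
    using t_upper \<open>1 \<le> L\<close> by (intro mult_left_mono) auto
  also have "\<dots> = l / 8 + L"
    using \<open>1 \<le> L\<close> by (simp add: field_simps)
  finally have "L * t \<le> 5/32 * l"
    using \<open>32 * L \<le> l\<close> by linarith
  then have "2 powr (- 5/32 * l) \<le> 2 powr (- L * t)"
    by simp
  also have "\<dots> = g ^ t"
    using assms(1) g_eq by (simp add: powr_realpow[symmetric] powr_powr)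
  finally show "2 powr (- 5/32 * log 2 n) \<le> g ^ t"
    unfolding l_def .
qed

lemma inverse_sqrt_le_powr:
  fixes x :: real
  assumes "0 < x" and "32 \<le> log 2 x"
  shows "1 / sqrt x \<le> 2 powr (- 5/32 * log 2 x) / 8"
proof -
  have "sqrt x = 2 powr (log 2 x / 2)"
    using assms(1) by (simp add: powr_half_sqrt[symmetric] powr_def log_def)
  then have "1 / sqrt x = 2 powr (- log 2 x / 2)"
    by (simp add: powr_minus_divide)
  also have "\<dots> \<le> 2 powr (- 5/32 * log 2 x - 3)"
    using assms(2) by simp
  also have "\<dots> = 2 powr (- 5/32 * log 2 x) / 8"
    by (simp add: powr_diff)
  finally show ?thesis .
qed

lemma square_div_le_powr:
  fixes x m t :: real
  assumes "0 < x" and "32 \<le> log 2 x" and "0 \<le> t" and "t \<le> 4 * 2 powr (log 2 x / 8)" and "x \<le> m"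
  shows "t * t / m \<le> 2 powr (- 5/32 * log 2 x) / 8"
proof -
  have "t * t \<le> (4 * 2 powr (log 2 x / 8)) * (4 * 2 powr (log 2 x / 8))"
    using assms(3,4) by (intro mult_mono) auto
  also have "\<dots> = 16 * 2 powr (log 2 x / 4)"
    by (simp flip: powr_add)
  also have "\<dots> = 2 powr (4 + log 2 x / 4)"
    by (simp add: powr_add powr_numeral)
  finally have "t * t / x \<le> 2 powr (4 + log 2 x / 4) / 2 powr (log 2 x)"
    using assms(1) by (simp add: divide_right_mono)
  moreover have "t * t / m \<le> t * t / x"
    using assms(1,3,5) by (intro divide_left_mono) auto
  moreover have "2 powr (4 + log 2 x / 4) / 2 powr (log 2 x) = 2 powr (4 + log 2 x / 4 - log 2 x)"
    by (rule powr_diff[symmetric])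
  moreover have "\<dots> \<le> 2 powr (- 5/32 * log 2 x - 3)"
    using assms(2) by simp
  moreover have "\<dots> = 2 powr (- 5/32 * log 2 x) / 8"
    by (simp add: powr_diff)
  ultimately show ?thesis
    by linarith
qed

lemma double_power_le:
  fixes g :: real
  assumes "0 < g" and "g \<le> 1/2" and "1 \<le> d" and "1 \<le> t"
  shows "2 * (2 * g ^ (8 * d)) ^ t \<le> g ^ t / 32"
proof -
  have "g ^ (8 * d) \<le> g ^ 8"
    using assms(1-3) by (intro power_decreasing) auto
  moreover have "g * g ^ 7 \<le> g * (1/2) ^ 7"
    using assms(1,2) by (intro mult_left_mono power_mono) auto
  ultimately have "2 * g ^ (8 * d) \<le> g / 64"
    by (simp add: power_Suc[symmetric] power_divide)
  then have "2 * (2 * g ^ (8 * d)) ^ t \<le> 2 * (g / 64) ^ t"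
    using assms(1) by (intro mult_left_mono power_mono) auto
  also have "\<dots> = 2 * g ^ t / 64 ^ t"
    by (simp add: power_divide)
  also have "\<dots> \<le> 2 * g ^ t / 64"
    using assms(1,4) by (intro divide_left_mono) (auto simp: self_le_power)
  finally show ?thesis
    by simp
qed

lemma dependent_choice_margin:
  fixes g m :: real and n h d t :: nat
  assumes "0 < g" and "g \<le> 1/2" and "2 \<le> h" and "1 \<le> d"
    and large: "g powr (- 16 * real h) \<le> n" and "n \<le> m"
    and t_def: "t = nat \<lceil>log 2 n / (8 * log 2 (1 / g))\<rceil>"
  shows "2 * (2 * g ^ (8 * d)) ^ t + 1 / sqrt n + t * t / m < g ^ t"
proof -
  note n_large = log_ge_of_powr_le[OF assms(1-3) large]
  note t_bounds = exponent_bounds[OF assms(1-3) large t_def]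
  have "1 / sqrt n \<le> g ^ t / 8"
    using inverse_sqrt_le_powr[of n] n_large t_bounds(3) by linarith
  moreover have "real t * t / m \<le> g ^ t / 8"
    using square_div_le_powr[of n t m] n_large t_bounds \<open>n \<le> m\<close> by linarith
  moreover have "2 * (2 * g ^ (8 * d)) ^ t \<le> g ^ t / 32"
    using double_power_le assms(1,2,4) t_bounds(1) by blast
  moreover have "0 < g ^ t"
    using assms(1) by simp
  ultimately show ?thesis
    by simp
qed

lemma log_ratio_le_self:
  fixes \<gamma> :: real
  assumes "0 < \<gamma>" and "\<gamma> \<le> 1/2" and "1 \<le> x"
  shows "log 2 x / (8 * log 2 (1 / \<gamma>)) \<le> x"
proof -
  have "1 \<le> log 2 (1 / \<gamma>)"
    using assms(1,2) by (simp add: le_log_iff field_simps)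
  then have "log 2 x / (8 * log 2 (1 / \<gamma>)) \<le> log 2 x / 8"
    using assms(3) by (intro divide_left_mono) auto
  also have "\<dots> \<le> x"
    using log2_le_double[of x] assms(3) by simp
  finally show ?thesis .
qed

lemma factor_gt_of_prod_gt:
  fixes a b :: "'i \<Rightarrow> real"
  assumes "finite I" and "i \<in> I" and "\<forall>j\<in>I. 0 \<le> b j \<and> b j \<le> a j" and "0 \<le> c"
    and "c * prod a I < prod b I"
  shows "c * a i < b i"
proof (rule ccontr)
  assume "\<not> c * a i < b i"
  have "prod b I = b i * prod b (I - {i})"
    using assms(1,2) by (simp add: prod.remove)
  also have "\<dots> \<le> c * a i * prod b (I - {i})"
    using \<open>\<not> c * a i < b i\<close> assms(3) by (intro mult_right_mono prod_nonneg) auto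
  also have "\<dots> \<le> c * a i * prod a (I - {i})"
    using assms(2-4) by (intro mult_left_mono prod_mono) (auto intro: mult_nonneg_nonneg order.trans)
  also have "\<dots> = c * prod a I"
    using assms(1,2) by (simp add: prod.remove)
  finally show False
    using assms(5) by simp
qed

lemma sqrt_of_nat_le: "sqrt (real n) \<le> real n"
  by (cases "n = 0") (auto intro: real_le_lsqrt simp: power2_eq_square)

lemma sqrt_le_divide_sqrt:
  assumes "n \<le> m"
  shows "sqrt (real n) \<le> m / sqrt n"
proof -
  have "n / sqrt n \<le> m / sqrt n"
    using assms by (intro divide_right_mono) auto
  then show ?thesis
    using real_div_sqrt[of n] by simp
qed

section \<open>Splitting off the last vertex\<close>

locale last_vertex_inflation =
  fixes EG :: "'a \<Rightarrow> 'a \<Rightarrow> bool" and EH :: "nat \<Rightarrow> nat \<Rightarrow> bool" and h :: nat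
    and V :: "nat \<Rightarrow> 'a set"
  assumes h_pos: "1 \<le> h"
    and graph_H: "graph_on h EH"
    and graph_G: "is_graph EG"
    and nbhd_independent: "\<forall>i j. EH h i \<and> EH h j \<longrightarrow> \<not> EH i j"
    and finite_parts: "\<forall>i\<in>{1..h}. finite (V i)"
    and disjoint_parts: "\<forall>i\<in>{1..h}. \<forall>j\<in>{1..h}. i \<noteq> j \<longrightarrow> V i \<inter> V j = {}"
begin

text \<open>A partial copy on \<open>N\<close> is completed to a copy of \<open>H\<close> by a partial copy on \<open>M\<close>,
  which contains \<open>h\<close>, and to a copy of \<open>H - h\<close> by a partial copy on \<open>R = M - {h}\<close>.\<close>

abbreviation N :: "nat set" where
  "N \<equiv> nbhd h EH h"

abbreviation M :: "nat set" where
  "M \<equiv> {1..h} - N"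

abbreviation R :: "nat set" where
  "R \<equiv> {1..h - 1} - N"

definition completions :: "(nat \<Rightarrow> 'a) \<Rightarrow> (nat \<Rightarrow> 'a) set" where
  "completions y = {w \<in> PiE M V. merge N M (y, w) \<in> canonical_copies EG EH h V}"

definition completions' :: "(nat \<Rightarrow> 'a) \<Rightarrow> (nat \<Rightarrow> 'a) set" where
  "completions' y = {z \<in> PiE R V. merge N R (y, z) \<in> canonical_copies EG EH (h - 1) V}"

lemma EH_sym: "EH i j \<Longrightarrow> EH j i"
  using graph_H by (simp add: graph_on_def is_graph_def)

lemma EG_sym: "EG x y \<Longrightarrow> EG y x"
  using graph_G by (simp add: is_graph_def)

lemma N_subset: "N \<subseteq> {1..h - 1}"
proof
  fix j assume "j \<in> N"
  then have "j \<in> {1..h}" and "EH h j"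
    by (auto simp: nbhd_def)
  moreover have "j \<noteq> h"
    using \<open>EH h j\<close> graph_H by (auto simp: graph_on_def is_graph_def)
  ultimately show "j \<in> {1..h - 1}"
    by auto
qed

lemma N_independent: "i \<in> N \<Longrightarrow> j \<in> N \<Longrightarrow> \<not> EH i j"
  unfolding nbhd_def using nbhd_independent by blast

lemma N_adjacent: "j \<in> N \<Longrightarrow> EH j h"
  using EH_sym by (simp add: nbhd_def)

lemma h_in_M: "h \<in> M"
  using N_subset h_pos by auto

lemma M_eq: "M = insert h R" and h_notin_R: "h \<notin> R"
  using N_subset h_pos by auto

lemma N_union_M: "N \<union> M = {1..h}" and N_union_R: "N \<union> R = {1..h - 1}"
  using N_subset by (auto simp: nbhd_def)

lemma finite_N: "finite N"
  using N_subset by (rule finite_subset) simp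

lemma finite_part: "i \<in> N \<union> M \<Longrightarrow> finite (V i)"
  using finite_parts N_union_M by blast

lemma finite_PiE_N: "finite (PiE N V)" and finite_PiE_M: "finite (PiE M V)"
  and finite_PiE_R: "finite (PiE R V)"
  using N_union_R N_union_M finite_N by (auto intro!: finite_PiE finite_part)

lemma merge_copy_iff:
  assumes "y \<in> PiE N V" and "w \<in> PiE M V"
    and "merge N M (y0, w) \<in> canonical_copies EG EH h V"
  shows "merge N M (y, w) \<in> canonical_copies EG EH h V \<longleftrightarrow> (\<forall>i\<in>N. \<forall>l\<in>M. EH i l \<longrightarrow> EG (y i) (w l))"
proof
  assume copy: "merge N M (y, w) \<in> canonical_copies EG EH h V"
  show "\<forall>i\<in>N. \<forall>l\<in>M. EH i l \<longrightarrow> EG (y i) (w l)"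
  proof (intro ballI impI)
    fix i l assume "i \<in> N" "l \<in> M" "EH i l"
    moreover have "i \<in> {1..h}" "l \<in> {1..h}"
      using \<open>i \<in> N\<close> \<open>l \<in> M\<close> N_union_M by blast+
    ultimately have "EG (merge N M (y, w) i) (merge N M (y, w) l)"
      using copy unfolding canonical_copies_def by blast
    then show "EG (y i) (w l)"
      using \<open>i \<in> N\<close> \<open>l \<in> M\<close> by (simp add: merge_def)
  qed
next
  assume cross: "\<forall>i\<in>N. \<forall>l\<in>M. EH i l \<longrightarrow> EG (y i) (w l)"
  have "EG (merge N M (y, w) a) (merge N M (y, w) b)" if "a \<in> {1..h}" "b \<in> {1..h}" "EH a b" for a b
  proof -
    have y0_edge: "EG (merge N M (y0, w) a) (merge N M (y0, w) b)"
      using assms(3) that by (auto simp: canonical_copies_def)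
    from that(1,2) consider "a \<in> N" "b \<in> N" | "a \<in> N" "b \<in> M" | "a \<in> M" "b \<in> N" | "a \<in> M" "b \<in> M"
      by blast
    then show ?thesis
    proof cases
      case 1
      then show ?thesis using N_independent that(3) by blast
    next
      case 2
      then show ?thesis using cross that(3) by (simp add: merge_def)
    next
      case 3
      then show ?thesis using cross EH_sym[OF that(3)] EG_sym by (simp add: merge_def)
    next
      case 4
      then show ?thesis using y0_edge by (simp add: merge_def)
    qed
  qed
  moreover have "merge N M (y, w) \<in> PiE {1..h} V"
    using assms(1,2) PiE_cancel_merge[of N M y w V] N_union_M by (auto simp: PiE_iff)
  ultimately show "merge N M (y, w) \<in> canonical_copies EG EH h V"
    by (simp add: canonical_copies_def)
qed

lemma common_completions_box:
  assumes "y0 \<in> PiE N V" and y0_completes: "\<forall>k\<in>K. ws k \<in> completions y0"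
  shows "{y \<in> PiE N V. \<forall>k\<in>K. ws k \<in> completions y}
    = PiE N (\<lambda>i. {u \<in> V i. \<forall>k\<in>K. \<forall>l\<in>M. EH i l \<longrightarrow> EG u (ws k l)})"
proof -
  have "ws k \<in> completions y \<longleftrightarrow> (\<forall>i\<in>N. \<forall>l\<in>M. EH i l \<longrightarrow> EG (y i) (ws k l))"
    if "y \<in> PiE N V" "k \<in> K" for y k
    using merge_copy_iff[OF that(1), of "ws k" y0] y0_completes that(2) by (auto simp: completions_def)
  then show ?thesis
    by (auto simp: PiE_iff extensional_def)
qed

lemma card_copies_eq_sum_completions:
  "card (canonical_copies EG EH h V) = (\<Sum>y\<in>PiE N V. card (completions y))"
proof -
  have "canonical_copies EG EH h V \<subseteq> PiE (N \<union> M) V"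
    unfolding N_union_M canonical_copies_def by blast
  then show ?thesis
    unfolding completions_def using finite_PiE_N finite_PiE_M N_union_M
    by (intro card_eq_sum_card_merge_fibres) auto
qed

lemma card_completions_le: "card (completions y) \<le> card (completions' y) * card (V h)"
proof -
  have "restrict w R \<in> completions' y" if "w \<in> completions y" for w
  proof -
    have "merge N R (y, restrict w R) = restrict (merge N M (y, w)) {1..h - 1}"
      using N_union_R by (auto simp: merge_def fun_eq_iff)
    then show ?thesis
      using that restrict_canonical_copies[of _ EG EH h V "h - 1"]
      by (auto simp: completions_def completions'_def PiE_iff)
  qed
  moreover have "completions y \<subseteq> PiE (insert h R) V"
    using M_eq by (auto simp: completions_def)
  moreover have "finite (completions y)"
    unfolding completions_def using finite_PiE_M by auto
  ultimately have "card (completions y) \<le> card ((\<lambda>w. restrict w R) ` completions y) * card (V h)"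
    using h_notin_R h_pos finite_parts by (intro card_le_card_restrict_mult) auto
  also have "\<dots> \<le> card (completions' y) * card (V h)"
  proof (intro mult_right_mono card_mono)
    show "finite (completions' y)"
      unfolding completions'_def using finite_PiE_R by auto
  qed (use \<open>\<And>w. w \<in> completions y \<Longrightarrow> restrict w R \<in> completions' y\<close> in auto)
  finally show ?thesis .
qed

lemma card_copies_of_box:
  assumes "\<forall>i\<in>N. B i \<subseteq> V i"
  shows "card (canonical_copies EG EH (h - 1) (\<lambda>i. if i \<in> N then B i else V i))
    = (\<Sum>y\<in>PiE N B. card (completions' y))"
proof -
  define V' where "V' = (\<lambda>i. if i \<in> N then B i else V i)"
  have sub: "\<forall>i\<in>{1..h - 1}. V' i \<subseteq> V i"
    using assms by (auto simp: V'_def)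
  have PiE_N: "PiE N V' = PiE N B"
    by (rule PiE_cong) (simp add: V'_def)
  have PiE_R: "PiE R V' = PiE R V"
    by (rule PiE_cong) (simp add: V'_def)
  have "finite (PiE N B)"
    using assms finite_part finite_N by (intro finite_PiE) (auto intro: finite_subset)
  have "canonical_copies EG EH (h - 1) V' \<subseteq> PiE (N \<union> R) V'"
    unfolding N_union_R canonical_copies_def by blast
  then have "card (canonical_copies EG EH (h - 1) V')
      = (\<Sum>y\<in>PiE N V'. card {z \<in> PiE R V'. merge N R (y, z) \<in> canonical_copies EG EH (h - 1) V'})"
    using \<open>finite (PiE N B)\<close> finite_PiE_R unfolding PiE_N[symmetric] PiE_R[symmetric]
    by (intro card_eq_sum_card_merge_fibres) auto
  also have "\<dots> = (\<Sum>y\<in>PiE N B. card {z \<in> PiE R V. merge N R (y, z) \<in> canonical_copies EG EH (h - 1) V'})"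
    by (simp only: PiE_N PiE_R)
  also have "\<dots> = (\<Sum>y\<in>PiE N B. card (completions' y))"
  proof (intro sum.cong refl arg_cong[where f = card])
    fix y assume "y \<in> PiE N B"
    have "merge N R (y, z) \<in> PiE {1..h - 1} V'" if "z \<in> PiE R V" for z
    proof -
      have "y \<in> Pi N V'" "z \<in> Pi R V'"
        using \<open>y \<in> PiE N B\<close> that unfolding PiE_N[symmetric] PiE_R[symmetric] by (auto simp: PiE_iff)
      then show ?thesis
        using PiE_cancel_merge[of N R y z V'] N_union_R by auto
    qed
    then show "{z \<in> PiE R V. merge N R (y, z) \<in> canonical_copies EG EH (h - 1) V'} = completions' y"
      using canonical_copies_subsets[OF sub] by (auto simp: completions'_def)
  qed
  finally show ?thesis
    by (simp add: V'_def)
qed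

lemma prod_card_parts: "(\<Prod>i\<in>{1..h}. card (V i)) = card (PiE N V) * card (PiE M V)"
proof -
  have "(\<Prod>i\<in>{1..h}. card (V i)) = (\<Prod>i\<in>N. card (V i)) * (\<Prod>i\<in>M. card (V i))"
    using finite_N N_union_M by (subst prod.union_disjoint[symmetric]) auto
  then show ?thesis
    using finite_N by (simp add: card_PiE)
qed

lemma card_PiE_M: "card (PiE M V) = card (PiE R V) * card (V h)"
  using M_eq h_notin_R by (simp add: card_PiE)

lemma sum_card_completions_ge:
  assumes dense: "\<gamma> * (\<Prod>i\<in>{1..h}. real (card (V i))) \<le> card (canonical_copies EG EH h V)"
  shows "\<gamma> * card (PiE M V) * card (PiE N V) \<le> (\<Sum>y\<in>PiE N V. card (completions y))"
proof -
  have "(\<Prod>i\<in>{1..h}. real (card (V i))) = real (card (PiE N V)) * card (PiE M V)"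
    unfolding of_nat_prod[symmetric] prod_card_parts by simp
  then show ?thesis
    using dense by (simp add: card_copies_eq_sum_completions mult_ac)
qed

definition few_completions :: "real \<Rightarrow> (nat \<Rightarrow> 'a) \<Rightarrow> bool" where
  "few_completions \<theta> y \<longleftrightarrow> real (card (completions' y)) < \<theta> * card (PiE R V)"

lemma card_completions_le_of_few:
  fixes \<theta> :: real
  assumes "few_completions \<theta> y"
  shows "card (completions y) \<le> \<theta> * card (PiE M V)"
proof -
  have "real (card (completions y)) \<le> real (card (completions' y)) * card (V h)"
    using card_completions_le[of y] by (simp flip: of_nat_mult)
  also have "\<dots> \<le> \<theta> * card (PiE R V) * card (V h)"
    using assms by (intro mult_right_mono) (auto simp: few_completions_def)
  finally show ?thesis
    unfolding card_PiE_M by (simp add: mult.assoc)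
qed

lemma sum_card_completions'_ge:
  assumes "finite Y" and few: "2 * card {y\<in>Y. few_completions \<theta> y} \<le> card Y" and "0 \<le> \<theta>"
  shows "\<theta> / 2 * card Y * card (PiE R V) \<le> (\<Sum>y\<in>Y. real (card (completions' y)))"
proof -
  let ?rich = "{y\<in>Y. \<not> few_completions \<theta> y}"
  have "card Y = card {y\<in>Y. few_completions \<theta> y} + card ?rich"
    using assms(1) by (subst card_Un_disjoint[symmetric]) (auto intro: arg_cong[where f = card])
  then have "real (card Y) \<le> 2 * card ?rich"
    using few by linarith
  then have "\<theta> / 2 * card Y * card (PiE R V) \<le> \<theta> / 2 * (2 * card ?rich) * card (PiE R V)"
    using \<open>0 \<le> \<theta>\<close> by (intro mult_right_mono mult_left_mono) auto
  also have "\<dots> = card ?rich * (\<theta> * card (PiE R V))"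
    by simp
  also have "\<dots> \<le> (\<Sum>y\<in>?rich. real (card (completions' y)))"
    by (intro sum_bounded_below) (simp add: few_completions_def)
  also have "\<dots> \<le> (\<Sum>y\<in>Y. real (card (completions' y)))"
    using assms(1) by (intro sum_mono2) auto
  finally show ?thesis .
qed

lemma card_copies_of_box_ge:
  assumes B_sub: "\<forall>i\<in>N. B i \<subseteq> V i" and "0 \<le> \<gamma>'"
    and few: "2 * card {y\<in>PiE N B. few_completions (2 * \<gamma>') y} \<le> card (PiE N B)"
  shows "\<gamma>' * (\<Prod>i\<in>{1..h - 1}. real (card (if i \<in> N then B i else V i)))
    \<le> card (canonical_copies EG EH (h - 1) (\<lambda>i. if i \<in> N then B i else V i))"
proof -
  have "finite (PiE N B)"
    using B_sub finite_part finite_N by (intro finite_PiE) (auto intro: finite_subset)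
  have "(\<Prod>i\<in>{1..h - 1}. real (card (if i \<in> N then B i else V i)))
      = (\<Prod>i\<in>R. real (card (if i \<in> N then B i else V i))) * (\<Prod>i\<in>N. real (card (if i \<in> N then B i else V i)))"
    by (rule prod.subset_diff[OF N_subset]) simp
  also have "\<dots> = card (PiE N B) * card (PiE R V)"
    using finite_N by (simp add: card_PiE)
  finally have "\<gamma>' * (\<Prod>i\<in>{1..h - 1}. real (card (if i \<in> N then B i else V i)))
      = \<gamma>' * card (PiE N B) * card (PiE R V)"
    by simp
  also have "\<dots> \<le> (\<Sum>y\<in>PiE N B. real (card (completions' y)))"
    using sum_card_completions'_ge[OF \<open>finite (PiE N B)\<close> few] \<open>0 \<le> \<gamma>'\<close> by simp
  also have "\<dots> = card (canonical_copies EG EH (h - 1) (\<lambda>i. if i \<in> N then B i else V i))"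
    using card_copies_of_box[OF B_sub] by simp
  finally show ?thesis .
qed

lemma box_parts_large:
  fixes \<epsilon> :: real
  assumes B_sub: "\<forall>i\<in>N. B i \<subseteq> V i" and "0 \<le> \<epsilon>" and large: "\<epsilon> * card (PiE N V) < card (PiE N B)"
    and "i \<in> N"
  shows "\<epsilon> * card (V i) < card (B i)"
proof (rule factor_gt_of_prod_gt[OF finite_N \<open>i \<in> N\<close> _ \<open>0 \<le> \<epsilon>\<close>])
  show "\<forall>j\<in>N. 0 \<le> real (card (B j)) \<and> real (card (B j)) \<le> real (card (V j))"
    using B_sub finite_part by (simp add: card_mono)
  show "\<epsilon> * (\<Prod>i\<in>N. real (card (V i))) < (\<Prod>i\<in>N. real (card (B i)))"
    using large finite_N by (simp add: card_PiE)
qed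

lemma core_of_good_tuple:
  fixes \<epsilon> \<gamma>' n' :: real
  assumes ws: "ws \<in> PiE {..<t} (\<lambda>_. PiE M V)" and inj: "inj_on (\<lambda>k. ws k h) {..<t}"
    and good: "2 * card {y \<in> PiE N V. few_completions (2 * \<gamma>') y \<and> (\<forall>k<t. ws k \<in> completions y)}
      + \<epsilon> * card (PiE N V) < card {y \<in> PiE N V. \<forall>k<t. ws k \<in> completions y}"
    and "0 \<le> \<epsilon>" and "0 \<le> \<gamma>'"
    and large: "\<forall>i\<in>{1..h}. n' \<le> \<epsilon> * card (V i) \<and> n' \<le> card (V i)"
  shows "\<exists>Vs V'. Vs \<subseteq> V h \<and> card Vs = t \<and> (\<forall>i\<in>{1..h - 1}. V' i \<subseteq> V i)
    \<and> (\<forall>j\<in>N. \<forall>x\<in>V' j. \<forall>y\<in>Vs. EG x y) \<and> inflation_ge EG EH (h - 1) V' \<gamma>' n'"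
proof -
  define B where "B i = {u \<in> V i. \<forall>k\<in>{..<t}. \<forall>l\<in>M. EH i l \<longrightarrow> EG u (ws k l)}" for i
  define V' where "V' = (\<lambda>i. if i \<in> N then B i else V i)"
  define Bs where "Bs = {y \<in> PiE N V. \<forall>k\<in>{..<t}. ws k \<in> completions y}"
  have B_sub: "\<forall>i\<in>N. B i \<subseteq> V i" and V'_sub: "\<forall>i\<in>{1..h - 1}. V' i \<subseteq> V i"
    by (auto simp: B_def V'_def)
  have "{y\<in>Bs. few_completions (2 * \<gamma>') y}
      = {y \<in> PiE N V. few_completions (2 * \<gamma>') y \<and> (\<forall>k<t. ws k \<in> completions y)}"
    and "Bs = {y \<in> PiE N V. \<forall>k<t. ws k \<in> completions y}"
    unfolding Bs_def by auto
  then have "2 * card {y\<in>Bs. few_completions (2 * \<gamma>') y} + \<epsilon> * card (PiE N V) < card Bs"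
    using good by simp
  moreover have "0 \<le> \<epsilon> * card (PiE N V)"
    using \<open>0 \<le> \<epsilon>\<close> by simp
  ultimately have eps_lt: "\<epsilon> * card (PiE N V) < card Bs"
    and few: "real (2 * card {y\<in>Bs. few_completions (2 * \<gamma>') y}) \<le> card Bs"
    by linarith+
  obtain y0 where "y0 \<in> Bs"
    using eps_lt \<open>0 \<le> \<epsilon> * card (PiE N V)\<close> by fastforce
  then have box: "Bs = PiE N B"
    unfolding Bs_def B_def using common_completions_box[of y0 "{..<t}" ws] by (simp add: Bs_def)
  have large_B: "\<epsilon> * card (V i) < card (B i)" if "i \<in> N" for i
    using box_parts_large[OF B_sub \<open>0 \<le> \<epsilon>\<close> _ that] eps_lt box by simp
  have "2 * card {y\<in>PiE N B. few_completions (2 * \<gamma>') y} \<le> card (PiE N B)"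
    using few unfolding box by (simp only: of_nat_le_iff)
  then have copies: "\<gamma>' * (\<Prod>i\<in>{1..h - 1}. real (card (V' i))) \<le> card (canonical_copies EG EH (h - 1) V')"
    unfolding V'_def by (rule card_copies_of_box_ge[OF B_sub \<open>0 \<le> \<gamma>'\<close>])
  have "n' \<le> card (V' i)" if "i \<in> {1..h - 1}" for i
  proof -
    have "i \<in> {1..h}"
      using that by auto
    then have "n' \<le> \<epsilon> * card (V i)" and "n' \<le> card (V i)"
      using large by blast+
    then show ?thesis
      using large_B[of i] by (cases "i \<in> N") (auto simp: V'_def)
  qed
  then have "inflation_ge EG EH (h - 1) V' \<gamma>' n'"
    using inflation_ge_of_subsets[OF _ V'_sub finite_parts disjoint_parts copies] by auto
  moreover have "(\<lambda>k. ws k h) ` {..<t} \<subseteq> V h" and "card ((\<lambda>k. ws k h) ` {..<t}) = t"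
    using ws inj h_in_M by (auto simp: PiE_iff card_image)
  moreover have "\<forall>j\<in>N. \<forall>x\<in>V' j. \<forall>y\<in>(\<lambda>k. ws k h) ` {..<t}. EG x y"
    using h_in_M N_adjacent by (auto simp: V'_def B_def)
  ultimately show ?thesis
    using V'_sub by blast
qed

lemma card_tuples_not_inj_last_le:
  "card {ws \<in> PiE {..<t} (\<lambda>_. PiE M V). \<not> inj_on (\<lambda>k. ws k h) {..<t}} * card (V h)
    \<le> t * t * card (PiE M V) ^ t"
proof (cases t)
  case (Suc s)
  have "\<forall>u. card {w \<in> PiE M V. w h = u} \<le> card (PiE R V)"
    using card_PiE_fibre_le[OF h_notin_R finite_PiE_R] M_eq by simp
  then have "card {ws \<in> PiE {..<t} (\<lambda>_. PiE M V). \<not> inj_on (\<lambda>k. ws k h) {..<t}}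
      \<le> t * t * card (PiE R V) * card (PiE M V) ^ (t - 1)"
    by (rule card_tuples_not_inj_le[OF finite_PiE_M])
  then have "card {ws \<in> PiE {..<t} (\<lambda>_. PiE M V). \<not> inj_on (\<lambda>k. ws k h) {..<t}} * card (V h)
      \<le> t * t * card (PiE R V) * card (PiE M V) ^ (t - 1) * card (V h)"
    by (rule mult_right_mono) simp
  also have "\<dots> = t * t * (card (PiE R V) * card (V h)) * card (PiE M V) ^ (t - 1)"
    by (simp only: mult_ac)
  also have "\<dots> = t * t * card (PiE M V) ^ t"
    unfolding card_PiE_M[symmetric] by (simp add: Suc algebra_simps)
  finally show ?thesis .
qed simp

lemma good_tuple_exists:
  fixes \<gamma> :: real and n t :: nat
  assumes "0 < \<gamma>" and "\<gamma> \<le> 1/2" and "N \<noteq> {}"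
    and large: "\<gamma> powr (- 16 * real h) \<le> n"
    and dense: "\<gamma> * (\<Prod>i\<in>{1..h}. real (card (V i))) \<le> card (canonical_copies EG EH h V)"
    and sizes: "\<forall>i\<in>{1..h}. n \<le> card (V i)"
    and t_def: "t = nat \<lceil>log 2 n / (8 * log 2 (1 / \<gamma>))\<rceil>"
  shows "\<exists>ws \<in> PiE {..<t} (\<lambda>_. PiE M V). inj_on (\<lambda>k. ws k h) {..<t} \<and>
    2 * card {y \<in> PiE N V. few_completions (2 * \<gamma> ^ (8 * card N)) y \<and> (\<forall>k<t. ws k \<in> completions y)}
    + 1 / sqrt n * card (PiE N V) < card {y \<in> PiE N V. \<forall>k<t. ws k \<in> completions y}"
proof (rule dependent_random_choice)
  have "0 < n"
    using large powr_gt_zero[of \<gamma> "- 16 * real h"] \<open>0 < \<gamma>\<close> by linarith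
  then have "V i \<noteq> {}" if "i \<in> {1..h}" for i
    using sizes that by fastforce
  then show "PiE N V \<noteq> {}" and "PiE M V \<noteq> {}"
    unfolding PiE_eq_empty_iff using N_union_M by blast+
  have "n \<le> card (V h)"
    using sizes h_pos by simp
  have "real (card {ws \<in> PiE {..<t} (\<lambda>_. PiE M V). \<not> inj_on (\<lambda>k. ws k h) {..<t}}) * card (V h)
      \<le> t * t * card (PiE M V) ^ t"
    using of_nat_mono[OF card_tuples_not_inj_last_le[of t]] by simp
  then show "card {ws \<in> PiE {..<t} (\<lambda>_. PiE M V). \<not> inj_on (\<lambda>k. ws k h) {..<t}}
      \<le> t * t / card (V h) * card (PiE M V) ^ t"
    using \<open>0 < n\<close> \<open>n \<le> card (V h)\<close> by (simp add: field_simps)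
  have "2 \<le> h" and "1 \<le> card N"
    using \<open>N \<noteq> {}\<close> N_subset finite_N by (auto simp: Suc_le_eq card_gt_0_iff)
  then show "2 * (2 * \<gamma> ^ (8 * card N)) ^ t + 1 / sqrt n + t * t / card (V h) < \<gamma> ^ t"
    using dependent_choice_margin[OF \<open>0 < \<gamma>\<close> \<open>\<gamma> \<le> 1/2\<close> _ _ large _ t_def] \<open>n \<le> card (V h)\<close>
    by simp
qed (use \<open>0 < \<gamma>\<close> finite_PiE_N finite_PiE_M sum_card_completions_ge[OF dense] card_completions_le_of_few
    in \<open>auto simp: completions_def\<close>)

lemma core_of_nonempty_nbhd:
  fixes \<gamma> :: real and n t :: nat
  assumes "0 < \<gamma>" and "\<gamma> \<le> 1/2" and "N \<noteq> {}"
    and large: "\<gamma> powr (- 16 * real h) \<le> n"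
    and dense: "\<gamma> * (\<Prod>i\<in>{1..h}. real (card (V i))) \<le> card (canonical_copies EG EH h V)"
    and sizes: "\<forall>i\<in>{1..h}. n \<le> card (V i)"
    and t_def: "t = nat \<lceil>log 2 n / (8 * log 2 (1 / \<gamma>))\<rceil>"
  shows "\<exists>Vs V'. Vs \<subseteq> V h \<and> card Vs = t \<and> (\<forall>i\<in>{1..h - 1}. V' i \<subseteq> V i)
    \<and> (\<forall>j\<in>N. \<forall>x\<in>V' j. \<forall>y\<in>Vs. EG x y) \<and> inflation_ge EG EH (h - 1) V' (\<gamma> ^ (8 * card N)) (sqrt n)"
proof -
  obtain ws where "ws \<in> PiE {..<t} (\<lambda>_. PiE M V)" and "inj_on (\<lambda>k. ws k h) {..<t}"
    and "2 * card {y \<in> PiE N V. few_completions (2 * \<gamma> ^ (8 * card N)) y \<and> (\<forall>k<t. ws k \<in> completions y)}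
      + 1 / sqrt n * card (PiE N V) < card {y \<in> PiE N V. \<forall>k<t. ws k \<in> completions y}"
    using good_tuple_exists[OF assms] by blast
  moreover have "\<forall>i\<in>{1..h}. sqrt n \<le> 1 / sqrt n * card (V i) \<and> sqrt n \<le> card (V i)"
    using sizes sqrt_le_divide_sqrt sqrt_of_nat_le[of n] by (auto intro: order.trans)
  ultimately show ?thesis
    using core_of_good_tuple[of ws t "\<gamma> ^ (8 * card N)" "1 / sqrt n" "sqrt n"] \<open>0 < \<gamma>\<close> by auto
qed

lemma inflation_ge_delete_last:
  fixes \<gamma> :: real and n :: nat
  assumes "0 < n"
    and dense: "\<gamma> * (\<Prod>i\<in>{1..h}. real (card (V i))) \<le> card (canonical_copies EG EH h V)"
    and sizes: "\<forall>i\<in>{1..h}. n \<le> card (V i)"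
  shows "inflation_ge EG EH (h - 1) V \<gamma> (sqrt n)"
proof -
  have "n \<le> card (V h)"
    using sizes h_pos by simp
  have "{1..h} = insert h {1..h - 1}"
    using h_pos by auto
  then have "\<gamma> * (\<Prod>i\<in>{1..h - 1}. real (card (V i))) * card (V h) = \<gamma> * (\<Prod>i\<in>{1..h}. real (card (V i)))"
    using h_pos by (simp add: mult_ac)
  also have "\<dots> \<le> card (canonical_copies EG EH h V)"
    by (rule dense)
  also have "\<dots> \<le> card (canonical_copies EG EH (h - 1) V) * card (V h)"
    using card_canonical_copies_le_delete_last[OF h_pos finite_parts] by (simp only: of_nat_le_iff)
  finally have "\<gamma> * (\<Prod>i\<in>{1..h - 1}. real (card (V i))) \<le> card (canonical_copies EG EH (h - 1) V)"
    using \<open>0 < n\<close> \<open>n \<le> card (V h)\<close> by simp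
  moreover have "\<forall>i\<in>{1..h - 1}. sqrt n \<le> card (V i)"
    using sizes sqrt_of_nat_le[of n] by (force intro: order.trans)
  ultimately show ?thesis
    by (intro inflation_ge_of_subsets[OF _ _ finite_parts disjoint_parts]) auto
qed

end

theorem lemma3p2:
  fixes EH :: "nat \<Rightarrow> nat \<Rightarrow> bool" and h :: nat
    and EG :: "'a \<Rightarrow> 'a \<Rightarrow> bool" and V :: "nat \<Rightarrow> 'a set"
    and \<gamma> :: real and n :: nat
  assumes "h \<ge> 1"
    and "graph_on h EH"
    and "\<forall>i j. EH h i \<and> EH h j \<longrightarrow> \<not> EH i j"
    and "0 < \<gamma>" and "\<gamma> \<le> 1/2"
    and "real n \<ge> \<gamma> powr (- 16 * real h)"
    and "is_graph EG"
    and "inflation_ge EG EH h V \<gamma> (real n)"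
  shows "\<exists>Vs V'. Vs \<subseteq> V h \<and> (\<forall>i\<in>{1..h-1}. V' i \<subseteq> V i)
     \<and> real (card Vs) \<ge> log 2 (real n) / (8 * log 2 (1 / \<gamma>))
     \<and> (\<forall>j\<in>nbhd h EH h. \<forall>x\<in>V' j. \<forall>y\<in>Vs. EG x y)
     \<and> inflation_ge EG EH (h - 1) V' (\<gamma> ^ max 1 (8 * deg h EH h)) (sqrt (real n))"
proof -
  have "\<forall>i\<in>{1..h}. finite (V i)"
    and "\<forall>i\<in>{1..h}. \<forall>j\<in>{1..h}. i \<noteq> j \<longrightarrow> V i \<inter> V j = {}"
    and dense: "\<gamma> * (\<Prod>i\<in>{1..h}. real (card (V i))) \<le> card (canonical_copies EG EH h V)"
    and sizes: "\<forall>i\<in>{1..h}. n \<le> card (V i)"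
    using assms(8) by (auto simp: inflation_ge_def inflation_def)
  then interpret last_vertex_inflation EG EH h V
    using assms(1,2,7,3) by unfold_locales
  have "0 < n"
    using assms(4,6) powr_gt_zero[of \<gamma> "- 16 * real h"] by linarith
  show ?thesis
  proof (cases "N = {}")
    case True
    have "log 2 n / (8 * log 2 (1 / \<gamma>)) \<le> card (V h)"
      using log_ratio_le_self[OF assms(4,5), of n] \<open>0 < n\<close> sizes assms(1) by force
    then show ?thesis
      using True inflation_ge_delete_last[OF \<open>0 < n\<close> dense sizes]
      by (intro exI[of _ "V h"] exI[of _ V]) (simp add: deg_def)
  next
    case False
    define t where "t = nat \<lceil>log 2 n / (8 * log 2 (1 / \<gamma>))\<rceil>"
    have "log 2 n / (8 * log 2 (1 / \<gamma>)) \<le> t"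
      unfolding t_def by linarith
    moreover have "max 1 (8 * deg h EH h) = 8 * card N"
      using False finite_N by (simp add: deg_def Suc_le_eq card_gt_0_iff)
    ultimately show ?thesis
      using core_of_nonempty_nbhd[OF assms(4,5) False assms(6) dense sizes t_def] by auto
  qed
qed

end
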